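(* Let $n$ be a non-zero integer, taken in canonical form. Then $n+(-n)\triangleq 1+(-1)\cong\{-1\mid 1\}$.
   Context: Games are short normal-play combinatorial games, written $G\cong\{L(G)\mid R(G)\}$, $\cong$ meaning identical literal forms. Canonical integers: $0\cong\{\ \mid\ \}$, $n\cong\{n-1\mid\ \}$ for $n>0$, $n\cong\{\ \mid n+1\}$ for $n<0$. Disjunctive sum $G+H\cong\{L(G)+H,G+L(H)\mid R(G)+H,G+R(H)\}$, negation $-G\cong\{-R(G)\mid -L(G)\}$. Equivalence modulo domination: $G\triangleq H$ means that in $G+(-H)$, for every move by either player as first player in one summand, the other player has a response in the other summand after which the responder wins. *)

theory Defs
  imports "HOL-Library.FSet"
begin

text \<open>Short games as literal forms: a game is a pair of finite sets of Left and Right options.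
  Identity of literal forms is HOL equality on this datatype.\<close>
datatype game = Game (lopts: "game fset") (ropts: "game fset")

primrec neg :: "game \<Rightarrow> game" where
  "neg (Game L R) = Game (fimage neg R) (fimage neg L)"

lemma size_fset_mem_le: "x |\<in>| X \<Longrightarrow> size x < size_fset size X"
  by (simp add: sum.remove[of "fset X" x] less_Suc_eq_le)

function (sequential) gsum :: "game \<Rightarrow> game \<Rightarrow> game" where
  "gsum (Game GL GR) (Game HL HR) =
     Game ((\<lambda>x. gsum x (Game HL HR)) |`| GL |\<union>| (\<lambda>y. gsum (Game GL GR) y) |`| HL)
          ((\<lambda>x. gsum x (Game HL HR)) |`| GR |\<union>| (\<lambda>y. gsum (Game GL GR) y) |`| HR)"
  by pat_completeness auto
termination
  by (relation "measure (\<lambda>(g, h). size g + size h)")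
     (auto dest!: size_fset_mem_le)

fun nat_game :: "nat \<Rightarrow> game" where
  "nat_game 0 = Game {||} {||}"
| "nat_game (Suc k) = Game {|nat_game k|} {||}"

fun negnat_game :: "nat \<Rightarrow> game" where
  "negnat_game 0 = Game {||} {||}"
| "negnat_game (Suc k) = Game {||} {|negnat_game k|}"

definition int_game :: "int \<Rightarrow> game" where
  "int_game n = (if n \<ge> 0 then nat_game (nat n) else negnat_game (nat (- n)))"

text \<open>Normal play outcomes.  lwins_first G: Left, moving first in G, has a winning strategy;
  lwins_second G: Left wins when Right moves first (the player unable to move loses).\<close>
inductive lwins_first :: "game \<Rightarrow> bool" and lwins_second :: "game \<Rightarrow> bool" where
  "GL |\<in>| lopts G \<Longrightarrow> lwins_second GL \<Longrightarrow> lwins_first G"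
| "(\<forall>GR. GR |\<in>| ropts G \<longrightarrow> lwins_first GR) \<Longrightarrow> lwins_second G"

inductive rwins_first :: "game \<Rightarrow> bool" and rwins_second :: "game \<Rightarrow> bool" where
  "GR |\<in>| ropts G \<Longrightarrow> rwins_second GR \<Longrightarrow> rwins_first G"
| "(\<forall>GL. GL |\<in>| lopts G \<longrightarrow> rwins_first GL) \<Longrightarrow> rwins_second G"

text \<open>Equivalence modulo domination G \<triangleq> H: in G + (-H), every first move by either player in one
  summand has an answer by the other player in the other summand after which the responder
  (now moving second) wins.  Left options of -H are -(H^R), Right options of -H are -(H^L).\<close>
definition dom_equiv :: "game \<Rightarrow> game \<Rightarrow> bool" where
  "dom_equiv G H \<longleftrightarrow>
     (\<forall>GL. GL |\<in>| lopts G \<longrightarrow> (\<exists>HL. HL |\<in>| lopts H \<and> rwins_second (gsum GL (neg HL)))) \<and>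
     (\<forall>HR. HR |\<in>| ropts H \<longrightarrow> (\<exists>GR. GR |\<in>| ropts G \<and> rwins_second (gsum GR (neg HR)))) \<and>
     (\<forall>GR. GR |\<in>| ropts G \<longrightarrow> (\<exists>HR. HR |\<in>| ropts H \<and> lwins_second (gsum GR (neg HR)))) \<and>
     (\<forall>HL. HL |\<in>| lopts H \<longrightarrow> (\<exists>GL. GL |\<in>| lopts G \<and> lwins_second (gsum GL (neg HL))))"

end

theory Submission imports Defs begin

text \<open>Call a game an integer sum of value v if it is a disjunctive sum of canonical integers
  with values adding up to v.  Its Left options are integer sums of value v - 1, its Right
  options integer sums of value v + 1, and Left (Right) has a move whenever v > 0 (v < 0).
  Hence, by induction on the game, Left wins moving second if v \<ge> 0 and Right if v \<le> 0.
  A Left option of n + (-n) has value -1, so adding -(-1) = 1 gives value 0, a second-player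
  win: this is the answer by the Left option -1 of {-1 | 1}, and symmetrically for Right.\<close>

lemma size_lopts_less: "x |\<in>| lopts G \<Longrightarrow> size x < size G"
  by (cases G) (auto dest: size_fset_mem_le)

lemma size_ropts_less: "x |\<in>| ropts G \<Longrightarrow> size x < size G"
  by (cases G) (auto dest: size_fset_mem_le)

lemma lopts_gsum: "lopts (gsum A B) = (\<lambda>x. gsum x B) |`| lopts A |\<union>| gsum A |`| lopts B"
  by (cases A; cases B) simp

lemma ropts_gsum: "ropts (gsum A B) = (\<lambda>x. gsum x B) |`| ropts A |\<union>| gsum A |`| ropts B"
  by (cases A; cases B) simp

lemma lopts_int_game: "lopts (int_game k) = (if 0 < k then {|int_game (k - 1)|} else {||})"
proof (cases "0 < k")
  case True
  then have "nat k = Suc (nat (k - 1))" by simp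
  with True show ?thesis by (simp add: int_game_def)
next
  case False
  then show ?thesis by (cases "nat (- k)") (simp_all add: int_game_def)
qed

lemma ropts_int_game: "ropts (int_game k) = (if k < 0 then {|int_game (k + 1)|} else {||})"
proof (cases "k < 0")
  case True
  then have "nat (- k) = Suc (nat (- (k + 1)))" by simp
  with True show ?thesis by (simp add: int_game_def)
next
  case False
  then show ?thesis by (cases "nat k") (simp_all add: int_game_def)
qed

lemma neg_nat_game: "neg (nat_game m) = negnat_game m"
  by (induction m) auto

lemma neg_negnat_game: "neg (negnat_game m) = nat_game m"
  by (induction m) auto

lemma neg_int_game: "neg (int_game k) = int_game (- k)"
  by (auto simp: int_game_def neg_nat_game neg_negnat_game)

lemma gsum_one_neg_one: "gsum (int_game 1) (neg (int_game 1)) = Game {|int_game (-1)|} {|int_game 1|}"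
  by (simp add: int_game_def)

inductive int_sum :: "game \<Rightarrow> int \<Rightarrow> bool" where
  int_sum_int_game: "int_sum (int_game k) k"
| int_sum_gsum: "int_sum A a \<Longrightarrow> int_sum B b \<Longrightarrow> int_sum (gsum A B) (a + b)"

lemma int_sum_lopts: "int_sum G v \<Longrightarrow> x |\<in>| lopts G \<Longrightarrow> int_sum x (v - 1)"
proof (induction G v arbitrary: x rule: int_sum.induct)
  case (int_sum_int_game k)
  then show ?case by (auto simp: lopts_int_game split: if_splits intro: int_sum.intros)
next
  case (int_sum_gsum A a B b)
  then show ?case
    using int_sum.int_sum_gsum[of _ "a - 1" B b] int_sum.int_sum_gsum[of A a _ "b - 1"]
    by (auto simp: lopts_gsum algebra_simps)
qed

lemma int_sum_ropts: "int_sum G v \<Longrightarrow> x |\<in>| ropts G \<Longrightarrow> int_sum x (v + 1)"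
proof (induction G v arbitrary: x rule: int_sum.induct)
  case (int_sum_int_game k)
  then show ?case by (auto simp: ropts_int_game split: if_splits intro: int_sum.intros)
next
  case (int_sum_gsum A a B b)
  then show ?case
    using int_sum.int_sum_gsum[of _ "a + 1" B b] int_sum.int_sum_gsum[of A a _ "b + 1"]
    by (auto simp: ropts_gsum algebra_simps)
qed

lemma int_sum_lopts_nonempty: "int_sum G v \<Longrightarrow> 0 < v \<Longrightarrow> lopts G \<noteq> {||}"
proof (induction rule: int_sum.induct)
  case (int_sum_gsum A a B b)
  then have "0 < a \<or> 0 < b" by arith
  with int_sum_gsum.IH show ?case by (auto simp: lopts_gsum)
qed (simp add: lopts_int_game)

lemma int_sum_ropts_nonempty: "int_sum G v \<Longrightarrow> v < 0 \<Longrightarrow> ropts G \<noteq> {||}"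
proof (induction rule: int_sum.induct)
  case (int_sum_gsum A a B b)
  then have "a < 0 \<or> b < 0" by arith
  with int_sum_gsum.IH show ?case by (auto simp: ropts_gsum)
qed (simp add: ropts_int_game)

lemma int_sum_lwins:
  "int_sum G v \<Longrightarrow> (0 \<le> v \<longrightarrow> lwins_second G) \<and> (1 \<le> v \<longrightarrow> lwins_first G)"
proof (induction G arbitrary: v rule: measure_induct_rule[of size])
  case (less G)
  have "lwins_second G" if "0 \<le> v"
  proof (rule lwins_first_lwins_second.intros(2), intro allI impI)
    fix x assume x: "x |\<in>| ropts G"
    with less.prems have "int_sum x (v + 1)" by (rule int_sum_ropts)
    with less.IH[OF size_ropts_less[OF x]] that show "lwins_first x" by auto
  qed
  moreover have "lwins_first G" if "1 \<le> v"
  proof -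
    from int_sum_lopts_nonempty[OF less.prems] that obtain x where x: "x |\<in>| lopts G"
      by fastforce
    with less.prems have "int_sum x (v - 1)" by (rule int_sum_lopts)
    with less.IH[OF size_lopts_less[OF x]] that have "lwins_second x" by auto
    with x show ?thesis by (rule lwins_first_lwins_second.intros)
  qed
  ultimately show ?case by blast
qed

lemma int_sum_rwins:
  "int_sum G v \<Longrightarrow> (v \<le> 0 \<longrightarrow> rwins_second G) \<and> (v \<le> -1 \<longrightarrow> rwins_first G)"
proof (induction G arbitrary: v rule: measure_induct_rule[of size])
  case (less G)
  have "rwins_second G" if "v \<le> 0"
  proof (rule rwins_first_rwins_second.intros(2), intro allI impI)
    fix x assume x: "x |\<in>| lopts G"
    with less.prems have "int_sum x (v - 1)" by (rule int_sum_lopts)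
    with less.IH[OF size_lopts_less[OF x]] that show "rwins_first x" by auto
  qed
  moreover have "rwins_first G" if "v \<le> -1"
  proof -
    from int_sum_ropts_nonempty[OF less.prems] that obtain x where x: "x |\<in>| ropts G"
      by fastforce
    with less.prems have "int_sum x (v + 1)" by (rule int_sum_ropts)
    with less.IH[OF size_ropts_less[OF x]] that have "rwins_second x" by auto
    with x show ?thesis by (rule rwins_first_rwins_second.intros)
  qed
  ultimately show ?case by blast
qed

lemma int_sum_zero_wins_second: "int_sum G 0 \<Longrightarrow> lwins_second G \<and> rwins_second G"
  using int_sum_lwins int_sum_rwins by blast

lemma int_sum_zero_dom_equiv_neg_one_one:
  assumes "int_sum G 0" and "lopts G \<noteq> {||}" and "ropts G \<noteq> {||}"
  shows "dom_equiv G (Game {|int_game (-1)|} {|int_game 1|})"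
proof -
  have lopt: "lwins_second (gsum x (int_game 1)) \<and> rwins_second (gsum x (int_game 1))"
    if "x |\<in>| lopts G" for x
    using int_sum_lopts[OF assms(1) that] int_sum_gsum[OF _ int_sum_int_game, of x "-1" 1]
    by (simp add: int_sum_zero_wins_second)
  have ropt: "lwins_second (gsum x (int_game (-1))) \<and> rwins_second (gsum x (int_game (-1)))"
    if "x |\<in>| ropts G" for x
    using int_sum_ropts[OF assms(1) that] int_sum_gsum[OF _ int_sum_int_game, of x 1 "-1"]
    by (simp add: int_sum_zero_wins_second)
  show ?thesis
    using assms(2,3) lopt ropt by (auto simp: dom_equiv_def neg_int_game)
qed

theorem lemma3p1:
  fixes n :: int
  assumes "n \<noteq> 0"
  shows "dom_equiv (gsum (int_game n) (neg (int_game n))) (gsum (int_game 1) (neg (int_game 1)))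
       \<and> gsum (int_game 1) (neg (int_game 1)) = Game {|int_game (-1)|} {|int_game 1|}"
proof -
  let ?G = "gsum (int_game n) (int_game (- n))"
  have "int_sum ?G 0"
    using int_sum_gsum[OF int_sum_int_game int_sum_int_game, of n "- n"] by simp
  moreover have "lopts ?G \<noteq> {||}" and "ropts ?G \<noteq> {||}"
    using assms by (auto simp: lopts_gsum ropts_gsum lopts_int_game ropts_int_game)
  ultimately have "dom_equiv ?G (Game {|int_game (-1)|} {|int_game 1|})"
    by (rule int_sum_zero_dom_equiv_neg_one_one)
  then show ?thesis
    by (simp add: gsum_one_neg_one neg_int_game[of n])
qed

end
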